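(* Let $a\geq 3$ and $m\geq 2a^2-a+2$ be integers, and suppose $[C(m,a)]$ is colored with red and blue so that there is no monochromatic solution of $L(m,a)$ in $[C(m,a)]$, with $a-2$ red and $a-1$ blue. Then $a$ is red and $m-1$ is blue.
   Context: For integers $m\geq 3$, $a\geq 1$, $L(m,a)$ denotes the equation $x_1+x_2+\cdots+x_{m-1}=a x_m$. For a positive integer $n$, $[n]=\{1,\dots,n\}$. A solution of $L(m,a)$ in $[n]$ is an $m$-tuple $(x_1,\dots,x_m)\in[n]^m$ (entries not necessarily distinct) satisfying the equation; given a 2-coloring of $[n]$, it is monochromatic if all $x_i$ have the same color. $C(m,a)$ denotes $\left\lceil \frac{m-1}{a}\left\lceil \frac{m-1}{a}\right\rceil\right\rceil$. *)

theory Defs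
  imports Complex_Main
begin

definition C :: "nat \<Rightarrow> nat \<Rightarrow> nat" where
  "C m a = nat \<lceil>(real (m - 1) / real a) * real_of_int \<lceil>real (m - 1) / real a\<rceil>\<rceil>"

definition is_solution :: "nat \<Rightarrow> nat \<Rightarrow> nat \<Rightarrow> (nat \<Rightarrow> nat) \<Rightarrow> bool" where
  "is_solution m a n x \<longleftrightarrow> (\<forall>i\<in>{1..m}. x i \<in> {1..n}) \<and> (\<Sum>i=1..m-1. x i) = a * x m"

text \<open>A 2-coloring is a map col : nat \<Rightarrow> bool (True = red, False = blue), relevant on [n].
  No monochromatic solution in [n].\<close>
definition no_mono_solution :: "nat \<Rightarrow> nat \<Rightarrow> nat \<Rightarrow> (nat \<Rightarrow> bool) \<Rightarrow> bool" where
  "no_mono_solution m a n col \<longleftrightarrow>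
     \<not> (\<exists>x. is_solution m a n x \<and> (\<exists>c. \<forall>i\<in>{1..m}. col (x i) = c))"

end

theory Submission
  imports Defs
begin

(*
  Every witness used below is a "block tuple": the first k unknowns
  equal u, the remaining m-1-k unknowns on the left equal v, and x_m = w.  Such a
  tuple solves L(m,a) as soon as k*u + (m-1-k)*v = a*w and u, v, w lie in [n];
  hence under a colouring without monochromatic solutions, u, v, w cannot all have
  the same colour.  The hypothesis m >= 2a^2-a+2 guarantees a^2 <= m-1, which
  gives m-1 <= C(m,a), so every number up to m-1 is available.

  With a-2 red and a-1 blue:
   * if a were blue, the block tuple (2a copies of a-1, then a's | m-3) forces
     m-3 to be red, and then (2 copies of m-3, then a-2's | m-3) is a red
     solution -- so a is red;
   * with a red, (m-1 copies of a | m-1) forces m-1 to be blue.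
*)

lemma sum_two_blocks:
  assumes "k \<le> N"
  shows "(\<Sum>i=1..N. if i \<le> k then u else v) = k * u + (N - k) * (v::nat)"
  using assms
proof (induction N)
  case 0
  then show ?case by simp
next
  case (Suc N)
  show ?case
  proof (cases "k \<le> N")
    case True
    then show ?thesis using Suc by (simp add: Suc_diff_le)
  next
    case False
    with Suc.prems have "k = Suc N" by simp
    then have "(\<Sum>i=1..Suc N. if i \<le> k then u else v) = (\<Sum>i=1..Suc N. u)"
      by (intro sum.cong) auto
    with \<open>k = Suc N\<close> show ?thesis by simp
  qed
qed

definition block_tuple :: "nat \<Rightarrow> nat \<Rightarrow> nat \<Rightarrow> nat \<Rightarrow> nat \<Rightarrow> nat \<Rightarrow> nat" where
  "block_tuple m k u v w = (\<lambda>i. if i = m then w else if i \<le> k then u else v)"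

lemma block_tuple_solution:
  assumes "k \<le> m - 1" and "u \<in> {1..n}" "v \<in> {1..n}" "w \<in> {1..n}"
    and balance: "k * u + (m - 1 - k) * v = a * w"
  shows "is_solution m a n (block_tuple m k u v w)"
proof -
  have "(\<Sum>i=1..m-1. block_tuple m k u v w i) = (\<Sum>i=1..m-1. if i \<le> k then u else v)"
    unfolding block_tuple_def by (intro sum.cong) auto
  also have "\<dots> = a * w"
    using sum_two_blocks[OF \<open>k \<le> m - 1\<close>] balance by simp
  finally show ?thesis
    using assms(2-4) unfolding is_solution_def block_tuple_def by auto
qed

lemma block_tuple_not_mono:
  assumes "no_mono_solution m a n col"
    and "k \<le> m - 1" and "u \<in> {1..n}" "v \<in> {1..n}" "w \<in> {1..n}"
    and "k * u + (m - 1 - k) * v = a * w"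
  shows "\<not> (col u = col w \<and> col v = col w)"
proof
  assume same: "col u = col w \<and> col v = col w"
  have "is_solution m a n (block_tuple m k u v w)"
    using block_tuple_solution assms(2-6) .
  moreover have "\<forall>i\<in>{1..m}. col (block_tuple m k u v w i) = col w"
    using same by (simp add: block_tuple_def)
  ultimately show False
    using assms(1) unfolding no_mono_solution_def by blast
qed

text \<open>If a^2 <= m-1 then (m-1)/a >= a, so C(m,a) >= ((m-1)/a) * a = m-1.\<close>
lemma C_ge:
  assumes "0 < a" and "a * a \<le> m - 1"
  shows "m - 1 \<le> C m a"
proof -
  define q where "q = real (m - 1) / real a"
  have apos: "real a > 0" using assms(1) by simp
  have "real a * real a \<le> real (m - 1)"
    using assms(2) by (metis of_nat_le_iff of_nat_mult)
  then have "real a \<le> q" unfolding q_def using apos by (simp add: field_simps)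
  then have "real a \<le> real_of_int \<lceil>q\<rceil>" using le_of_int_ceiling order_trans by blast
  then have "q * real a \<le> q * real_of_int \<lceil>q\<rceil>"
    using \<open>real a \<le> q\<close> apos by (intro mult_left_mono) auto
  moreover have "q * real a = real (m - 1)" unfolding q_def using apos by simp
  ultimately have "real (m - 1) \<le> real_of_int \<lceil>q * real_of_int \<lceil>q\<rceil>\<rceil>"
    using le_of_int_ceiling order_trans by metis
  then show ?thesis unfolding C_def q_def by linarith
qed

lemma size_bounds:
  fixes a m :: nat
  assumes "a \<ge> 3" and "m \<ge> 2 * a^2 - a + 2"
  shows "a * a \<le> m - 1" and "2 * a + 2 \<le> m - 1"
proof -
  have "a * a + a \<le> 2 * a^2" using assms(1) by (simp add: power2_eq_square)
  then show sq: "a * a \<le> m - 1" using assms(2) by linarith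
  have "3 * a \<le> a * a" using assms(1) by simp
  then show "2 * a + 2 \<le> m - 1" using sq assms(1) by linarith
qed

lemma balance_blue:
  fixes a m :: nat
  assumes "1 \<le> a" and "2 * a + 2 \<le> m - 1"
  shows "2 * a * (a - 1) + (m - 1 - 2 * a) * a = a * (m - 3)"
proof -
  define d where "d = m - (2 * a + 3)"
  have rest: "m - 1 - 2 * a = d + 2" and top: "m - 3 = 2 * a + d"
    using assms(2) unfolding d_def by linarith+
  have "2 * a * (a - 1) + (m - 1 - 2 * a) * a = a * ((2 * (a - 1) + 2) + d)"
    unfolding rest by (simp add: algebra_simps)
  also have "2 * (a - 1) + 2 = 2 * a" using assms(1) by simp
  finally show ?thesis unfolding top .
qed

lemma balance_red:
  fixes a m :: nat
  assumes "2 \<le> a" and "3 \<le> m"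
  shows "2 * (m - 3) + (m - 1 - 2) * (a - 2) = a * (m - 3)"
proof -
  have "m - 1 - 2 = m - 3" by simp
  then have "2 * (m - 3) + (m - 1 - 2) * (a - 2) = (2 + (a - 2)) * (m - 3)"
    by (simp add: algebra_simps)
  also have "2 + (a - 2) = a" using assms(1) by simp
  finally show ?thesis by simp
qed

theorem lemma3:
  fixes m a :: nat and col :: "nat \<Rightarrow> bool"
  assumes "a \<ge> 3" and "m \<ge> 2 * a^2 - a + 2"
    and "no_mono_solution m a (C m a) col"
    and "col (a - 2)" and "\<not> col (a - 1)"
  shows "col a \<and> \<not> col (m - 1)"
proof -
  note nomono = block_tuple_not_mono[OF assms(3)]
  have sq: "a * a \<le> m - 1" and big: "2 * a + 2 \<le> m - 1"
    using size_bounds[OF assms(1,2)] by auto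
  have "m - 1 \<le> C m a" using C_ge[of a m] sq assms(1) by simp
  then have a_in: "a \<in> {1..C m a}" and a1_in: "a - 1 \<in> {1..C m a}"
    and a2_in: "a - 2 \<in> {1..C m a}" and m3_in: "m - 3 \<in> {1..C m a}"
    and m1_in: "m - 1 \<in> {1..C m a}"
    using big assms(1) by auto
  have m_ge3: "3 \<le> m" and k_blue: "2 * a \<le> m - 1" and k_red: "2 \<le> m - 1"
    using big by linarith+
  have red_a: "col a"
  proof (rule ccontr)
    assume blue_a: "\<not> col a"
    have "col (m - 3)"
      using nomono[OF k_blue a1_in a_in m3_in balance_blue] big assms(1,5) blue_a by auto
    then show False
      using nomono[OF k_red m3_in a2_in m3_in balance_red[OF _ m_ge3]] assms(1,4) by auto
  qed
  have "\<not> col (m - 1)"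
    using nomono[OF order_refl a_in a_in m1_in] red_a by auto
  with red_a show ?thesis by simp
qed

end
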